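(* Let $\gamma>0$, $a,b,c,d>0$ and $\rho>1/2$. Let $(x_n)$ and $(y_n)$ be sequences of positive real numbers satisfying, for all $n$, $$x_{n+1}-x_n\le-\gamma a\,x_n^{1+\rho}y_n^{-\rho}+\gamma b\,x_n,\qquad y_{n+1}-y_n\le-\gamma c\,x_n^\rho y_n^{1-\rho}+\gamma d\sqrt{x_ny_n}.$$ Assume further that $$x_k\ge\Big(\frac dc\Big)^{\frac{2}{2\rho-1}}y_0\quad\text{and}\quad x_k\ge\Big(2\frac ba\Big)^{\frac1\rho}y_0\qquad\text{for all }k=0,\dots,n-1.$$ Then $x_n\le e^{-\gamma bn}x_0$ and $y_n\le y_0$. *)

theory Defs
  imports Complex_Main
begin

end

theory Submission
  imports Defs
begin

text \<open>Both recursions are homogeneous of degree one in \<open>(x, y)\<close>, so each step only depends on the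
  ratio \<open>r = x / y\<close>: \<open>x' \<le> x (1 - \<gamma> a r\<^sup>\<rho> + \<gamma> b)\<close> and \<open>y' \<le> y (1 - \<gamma> (c r\<^sup>\<rho> - d \<surd>r))\<close>.
  While \<open>y\<close> has not grown above \<open>y\<^sub>0\<close>, the hypotheses keep \<open>r\<close> above both thresholds, where
  \<open>c r\<^sup>\<rho> \<ge> d \<surd>r\<close> (so \<open>y\<close> does not grow) and \<open>a r\<^sup>\<rho> \<ge> 2 b\<close> (so \<open>x\<close> contracts by
  \<open>1 - \<gamma> b \<le> exp (- \<gamma> b)\<close>).\<close>

lemma powr_rho_mult_powr_one_minus:
  fixes x y \<rho> :: real
  assumes "x > 0" "y > 0"
  shows "x powr \<rho> * y powr (1 - \<rho>) = y * (x / y) powr \<rho>"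
  using assms by (simp add: powr_divide powr_diff)

lemma powr_one_plus_mult_powr_minus:
  fixes x y \<rho> :: real
  assumes "x > 0" "y > 0"
  shows "x powr (1 + \<rho>) * y powr (- \<rho>) = x * (x / y) powr \<rho>"
  using assms by (simp add: powr_divide powr_add powr_minus_divide)

lemma sqrt_mult_eq_mult_ratio_powr_half:
  fixes x y :: real
  assumes "x > 0" "y > 0"
  shows "sqrt (x * y) = y * (x / y) powr (1/2)"
proof -
  have "x * y = (x / y) * y\<^sup>2"
    using assms by (simp add: power2_eq_square)
  then have "sqrt (x * y) = sqrt (x / y) * sqrt (y\<^sup>2)"
    by (metis real_sqrt_mult)
  then show ?thesis
    using assms by (simp add: powr_half_sqrt)
qed

lemma le_powr_of_root_le:
  fixes t r e :: real
  assumes "e > 0" "t > 0" "t powr (1 / e) \<le> r"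
  shows "t \<le> r powr e"
proof -
  have "t = (t powr (1 / e)) powr e"
    using assms(1,2) by (simp add: powr_powr)
  also have "\<dots> \<le> r powr e"
    using assms by (intro powr_mono2) auto
  finally show ?thesis .
qed

lemma ratio_le_of_ge_threshold:
  fixes x y t e :: real
  assumes "y > 0" "e > 0" "t > 0" "x \<ge> t powr (1 / e) * y"
  shows "t \<le> (x / y) powr e"
  using assms by (intro le_powr_of_root_le) (simp_all add: pos_le_divide_eq)

lemma y_step_nonincreasing:
  fixes \<gamma> c d \<rho> x y y' :: real
  assumes "\<gamma> \<ge> 0" "c > 0" "d > 0" "\<rho> > 1/2" "x > 0" "y > 0"
    and step: "y' - y \<le> - \<gamma> * c * x powr \<rho> * y powr (1 - \<rho>) + \<gamma> * d * sqrt (x * y)"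
    and above: "x \<ge> (d / c) powr (2 / (2 * \<rho> - 1)) * y"
  shows "y' \<le> y"
proof -
  define r where "r = x / y"
  have "2 / (2 * \<rho> - 1) = 1 / (\<rho> - 1/2)"
    by (simp add: field_simps)
  then have "d / c \<le> r powr (\<rho> - 1/2)"
    using assms above unfolding r_def by (intro ratio_le_of_ge_threshold) auto
  then have "d * r powr (1/2) \<le> c * r powr (\<rho> - 1/2) * r powr (1/2)"
    using \<open>c > 0\<close> by (intro mult_right_mono) (simp_all add: pos_divide_le_eq mult.commute)
  also have "\<dots> = c * r powr \<rho>"
    by (simp add: mult.assoc powr_add[symmetric])
  finally have "\<gamma> * d * (y * r powr (1/2)) \<le> \<gamma> * c * (y * r powr \<rho>)"
    using assms(1,6) by (simp add: mult_left_mono mult.assoc mult.left_commute)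
  then show ?thesis
    using step assms(5,6) unfolding r_def
    by (simp add: powr_rho_mult_powr_one_minus sqrt_mult_eq_mult_ratio_powr_half mult.assoc)
qed

lemma x_step_contracts:
  fixes \<gamma> a b \<rho> x y x' :: real
  assumes "\<gamma> \<ge> 0" "a > 0" "b > 0" "\<rho> > 0" "x > 0" "y > 0"
    and step: "x' - x \<le> - \<gamma> * a * x powr (1 + \<rho>) * y powr (- \<rho>) + \<gamma> * b * x"
    and above: "x \<ge> (2 * (b / a)) powr (1 / \<rho>) * y"
  shows "x' \<le> exp (- \<gamma> * b) * x"
proof -
  define r where "r = x / y"
  have "2 * (b / a) \<le> r powr \<rho>"
    using assms above unfolding r_def by (intro ratio_le_of_ge_threshold) auto
  then have "\<gamma> * (2 * b) * x \<le> \<gamma> * (a * r powr \<rho>) * x"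
    using assms(1,2,5) by (intro mult_right_mono mult_left_mono) (auto simp: field_simps)
  moreover have "\<gamma> * a * x powr (1 + \<rho>) * y powr (- \<rho>) = \<gamma> * (a * r powr \<rho>) * x"
    using powr_one_plus_mult_powr_minus[OF assms(5,6), of \<rho>] unfolding r_def
    by (simp only: mult.assoc) (simp add: mult_ac)
  ultimately have "x' \<le> x - \<gamma> * b * x"
    using step by linarith
  also have "\<dots> = (1 - \<gamma> * b) * x"
    by (simp add: algebra_simps)
  also have "\<dots> \<le> exp (- \<gamma> * b) * x"
    using \<open>x > 0\<close> exp_ge_add_one_self[of "- \<gamma> * b"] by (intro mult_right_mono) auto
  finally show ?thesis .
qed

lemma le_power_mult_of_step_le:
  fixes u :: "nat \<Rightarrow> real" and q :: real
  assumes "q \<ge> 0" "\<And>k. k < n \<Longrightarrow> u (Suc k) \<le> q * u k"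
  shows "u n \<le> q ^ n * u 0"
  using assms(2)
proof (induction n)
  case 0
  then show ?case by simp
next
  case (Suc n)
  have "u (Suc n) \<le> q * u n"
    using Suc.prems by simp
  also have "\<dots> \<le> q * (q ^ n * u 0)"
    using Suc \<open>q \<ge> 0\<close> by (intro mult_left_mono) auto
  finally show ?case by (simp add: mult.assoc)
qed

theorem lemma3p3:
  fixes \<gamma> a b c d \<rho> :: real and x y :: "nat \<Rightarrow> real" and n :: nat
  assumes "\<gamma> > 0" "a > 0" "b > 0" "c > 0" "d > 0" "\<rho> > 1/2"
    and "\<And>m. x m > 0" "\<And>m. y m > 0"
    and "\<And>m. x (Suc m) - x m \<le> - \<gamma> * a * x m powr (1 + \<rho>) * y m powr (- \<rho>) + \<gamma> * b * x m"
    and "\<And>m. y (Suc m) - y m \<le> - \<gamma> * c * x m powr \<rho> * y m powr (1 - \<rho>) + \<gamma> * d * sqrt (x m * y m)"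
    and "\<And>k. k < n \<Longrightarrow> x k \<ge> (d / c) powr (2 / (2 * \<rho> - 1)) * y 0"
    and "\<And>k. k < n \<Longrightarrow> x k \<ge> (2 * (b / a)) powr (1 / \<rho>) * y 0"
  shows "x n \<le> exp (- \<gamma> * b * real n) * x 0 \<and> y n \<le> y 0"
proof -
  have y_bounded: "y k \<le> y 0" if "k \<le> n" for k
    using that
  proof (induction k)
    case (Suc k)
    have "(d / c) powr (2 / (2 * \<rho> - 1)) * y k \<le> (d / c) powr (2 / (2 * \<rho> - 1)) * y 0"
      using Suc by (intro mult_left_mono) auto
    also have "\<dots> \<le> x k"
      using assms(11) Suc.prems by simp
    finally have "x k \<ge> (d / c) powr (2 / (2 * \<rho> - 1)) * y k" .
    then have "y (Suc k) \<le> y k"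
      using \<open>\<gamma> > 0\<close> by (intro y_step_nonincreasing[OF _ assms(4-8,10)]) simp
    with Suc show ?case by simp
  qed simp
  have "x (Suc k) \<le> exp (- \<gamma> * b) * x k" if "k < n" for k
  proof -
    have "(2 * (b / a)) powr (1 / \<rho>) * y k \<le> (2 * (b / a)) powr (1 / \<rho>) * y 0"
      using y_bounded that by (intro mult_left_mono) auto
    also have "\<dots> \<le> x k"
      using assms(12) that by simp
    finally have "x k \<ge> (2 * (b / a)) powr (1 / \<rho>) * y k" .
    moreover have "\<rho> > 0"
      using \<open>\<rho> > 1/2\<close> by simp
    ultimately show ?thesis
      using \<open>\<gamma> > 0\<close> by (intro x_step_contracts[OF _ assms(2,3) _ assms(7,8,9)]) simp_all
  qed
  then have "x n \<le> exp (- \<gamma> * b) ^ n * x 0"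
    by (intro le_power_mult_of_step_le) auto
  then show ?thesis
    using y_bounded by (simp add: exp_of_nat_mult[symmetric] mult.commute)
qed

end
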